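(* For every tree $T$, the skew token sliding graph $\mathcal{Z}^{\mathrm{TS}}_-(T)$ contains no edges.
   Context: Skew forcing: vertices are colored blue or white; if any vertex $u$ (blue or white) has exactly one white neighbor $v$, then $u$ may force $v$ to become blue. A skew forcing set is a (possibly empty) set of initially blue vertices from which repeated application of this rule turns every vertex blue; $\mathrm{Z}_-(G)$ is the minimum size of a skew forcing set. $\mathcal{Z}^{\mathrm{TS}}_-(G)$ has as vertices the minimum skew forcing sets of $G$, with $S_1S_2$ an edge iff $S_1\setminus S_2=\{v_1\}$, $S_2\setminus S_1=\{v_2\}$ and $v_1v_2\in E(G)$. *)

theory Defs
  imports Main
begin

definition simple_graph :: "'a set \<Rightarrow> ('a \<Rightarrow> 'a \<Rightarrow> bool) \<Rightarrow> bool" where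
  "simple_graph V E \<longleftrightarrow> finite V \<and> (\<forall>u v. E u v \<longrightarrow> u \<in> V \<and> v \<in> V)
     \<and> (\<forall>u v. E u v \<longrightarrow> E v u) \<and> (\<forall>u. \<not> E u u)"

definition connected_graph :: "'a set \<Rightarrow> ('a \<Rightarrow> 'a \<Rightarrow> bool) \<Rightarrow> bool" where
  "connected_graph V E \<longleftrightarrow> (\<forall>u\<in>V. \<forall>v\<in>V. E\<^sup>*\<^sup>* u v)"

definition has_cycle :: "'a set \<Rightarrow> ('a \<Rightarrow> 'a \<Rightarrow> bool) \<Rightarrow> bool" where
  "has_cycle V E \<longleftrightarrow> (\<exists>cs. length cs \<ge> 3 \<and> distinct cs \<and> set cs \<subseteq> V
     \<and> (\<forall>i. Suc i < length cs \<longrightarrow> E (cs ! i) (cs ! Suc i))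
     \<and> E (last cs) (hd cs))"

definition tree :: "'a set \<Rightarrow> ('a \<Rightarrow> 'a \<Rightarrow> bool) \<Rightarrow> bool" where
  "tree V E \<longleftrightarrow> simple_graph V E \<and> V \<noteq> {} \<and> connected_graph V E \<and> \<not> has_cycle V E"

text \<open>Set of vertices that end up blue starting from S under the skew forcing rule:
  any vertex u (blue or white) all of whose neighbours other than v are blue
  may force its neighbour v.\<close>
inductive_set skew_closure :: "'a set \<Rightarrow> ('a \<Rightarrow> 'a \<Rightarrow> bool) \<Rightarrow> 'a set \<Rightarrow> 'a set"
  for V E S where
  init: "v \<in> S \<Longrightarrow> v \<in> skew_closure V E S"
| force: "\<lbrakk>u \<in> V; E u v; \<forall>w. E u w \<and> w \<noteq> v \<longrightarrow> w \<in> skew_closure V E S\<rbrakk>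
           \<Longrightarrow> v \<in> skew_closure V E S"

definition skew_forcing_set :: "'a set \<Rightarrow> ('a \<Rightarrow> 'a \<Rightarrow> bool) \<Rightarrow> 'a set \<Rightarrow> bool" where
  "skew_forcing_set V E S \<longleftrightarrow> S \<subseteq> V \<and> V \<subseteq> skew_closure V E S"

definition skew_zero_forcing_number :: "'a set \<Rightarrow> ('a \<Rightarrow> 'a \<Rightarrow> bool) \<Rightarrow> nat" where
  "skew_zero_forcing_number V E = Min (card ` {S. skew_forcing_set V E S})"

definition min_skew_forcing_set :: "'a set \<Rightarrow> ('a \<Rightarrow> 'a \<Rightarrow> bool) \<Rightarrow> 'a set \<Rightarrow> bool" where
  "min_skew_forcing_set V E S \<longleftrightarrow> skew_forcing_set V E S
     \<and> card S = skew_zero_forcing_number V E"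

definition skew_TS_edge :: "'a set \<Rightarrow> ('a \<Rightarrow> 'a \<Rightarrow> bool) \<Rightarrow> 'a set \<Rightarrow> 'a set \<Rightarrow> bool" where
  "skew_TS_edge V E S1 S2 \<longleftrightarrow> min_skew_forcing_set V E S1 \<and> min_skew_forcing_set V E S2
     \<and> (\<exists>v1 v2. S1 - S2 = {v1} \<and> S2 - S1 = {v2} \<and> E v1 v2)"

end

theory Submission
  imports Defs
begin

(* In any graph, a skew forcing set S leaves a matching that covers V - S: a force u -> v is
   recorded by matching u with v. Conversely, in an acyclic graph every matching covering V - S
   makes S skew forcing: if a vertex stayed white, walking alternately along matching edges out
   of white vertices and along non-matching edges into white vertices would never backtrack,
   and such a walk in a finite graph closes a cycle. Hence a minimum skew forcing set of a tree
   is exactly the set of vertices left unmatched by some matching. If two minimum sets S1, S2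
   differ by sliding a token along an edge v1 v2, then the symmetric difference of their
   matchings together with v1 v2 is a non-backtracking relation, so the tree has a cycle. *)

definition matching :: "('a \<Rightarrow> 'a \<Rightarrow> bool) \<Rightarrow> ('a \<Rightarrow> 'a \<Rightarrow> bool) \<Rightarrow> bool" where
  "matching E M \<longleftrightarrow> (\<forall>x y. M x y \<longrightarrow> E x y) \<and> (\<forall>x y. M x y \<longrightarrow> M y x)
     \<and> (\<forall>x y z. M x y \<longrightarrow> M x z \<longrightarrow> y = z)"

definition matched :: "('a \<Rightarrow> 'a \<Rightarrow> bool) \<Rightarrow> 'a set" where
  "matched M = {x. \<exists>y. M x y}"

lemma matching_edge: "matching E M \<Longrightarrow> M x y \<Longrightarrow> E x y"
  unfolding matching_def by blast

lemma matching_sym: "matching E M \<Longrightarrow> M x y \<Longrightarrow> M y x"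
  unfolding matching_def by blast

lemma matching_unique: "matching E M \<Longrightarrow> M x y \<Longrightarrow> M x z \<Longrightarrow> y = z"
  unfolding matching_def by blast

lemma matching_rematch:
  assumes M: "matching E M" and uv: "E u v" "E v u" and v_free: "v \<notin> matched M"
  shows "\<exists>M'. matching E M' \<and> insert u (insert v (matched M - {x. M x u})) \<subseteq> matched M'"
proof -
  define M' where
    "M' x y \<longleftrightarrow> (M x y \<and> x \<noteq> u \<and> y \<noteq> u) \<or> (x = u \<and> y = v) \<or> (x = v \<and> y = u)" for x y
  have "matching E M'"
    using M uv v_free unfolding matching_def matched_def M'_def by blast
  moreover have "insert u (insert v (matched M - {x. M x u})) \<subseteq> matched M'"
    using matching_sym[OF M] unfolding matched_def M'_def by blast
  ultimately show ?thesis by blast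
qed

lemma subset_skew_closure: "S \<subseteq> skew_closure V E S"
  by (blast intro: skew_closure.init)

lemma skew_closure_mono:
  assumes "A \<subseteq> B"
  shows "skew_closure V E A \<subseteq> skew_closure V E B"
proof
  fix x assume "x \<in> skew_closure V E A"
  then show "x \<in> skew_closure V E B"
    by induction (use assms in \<open>auto intro: skew_closure.intros\<close>)
qed

lemma skew_closure_least:
  assumes closed: "\<And>u v. u \<in> V \<Longrightarrow> E u v \<Longrightarrow> (\<forall>w. E u w \<and> w \<noteq> v \<longrightarrow> w \<in> B) \<Longrightarrow> v \<in> B"
  shows "skew_closure V E B \<subseteq> B"
proof
  fix x assume "x \<in> skew_closure V E B"
  then show "x \<in> B"
    by induction (use closed in blast)+
qed

lemma skew_closure_other_white_neighbour:
  assumes "u \<in> V" "E u v" "v \<notin> skew_closure V E S"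
  shows "\<exists>w. E u w \<and> w \<noteq> v \<and> w \<notin> skew_closure V E S"
  using assms skew_closure.force[of u V E v S] by blast

lemma nonbacktracking_walk:
  assumes start: "H a b" and continue: "\<And>x y. H x y \<Longrightarrow> \<exists>z. H y z \<and> z \<noteq> x"
  obtains s where "\<And>n. H (s n) (s (Suc n))" "\<And>n. s (Suc (Suc n)) \<noteq> s n"
proof -
  obtain nxt where nxt: "\<And>x y. H x y \<Longrightarrow> H y (nxt x y) \<and> nxt x y \<noteq> x"
    using continue by metis
  define p where "p n = ((\<lambda>(x, y). (y, nxt x y)) ^^ n) (a, b)" for n
  have p_Suc: "p (Suc n) = (snd (p n), nxt (fst (p n)) (snd (p n)))" for n
    by (simp add: p_def split: prod.splits)
  have H_p: "H (fst (p n)) (snd (p n))" for n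
    by (induction n) (use start nxt p_Suc in \<open>auto simp: p_def\<close>)
  show thesis
  proof (rule that[of "\<lambda>n. fst (p n)"])
    show "H (fst (p n)) (fst (p (Suc n)))" for n
      using H_p p_Suc by simp
    show "fst (p (Suc (Suc n))) \<noteq> fst (p n)" for n
      using nxt[OF H_p] p_Suc by simp
  qed
qed

lemma has_cycle_if_walk:
  assumes sg: "simple_graph V E"
    and walk: "\<And>n. E (s n) (s (Suc n))" and no_backtrack: "\<And>n. s (Suc (Suc n)) \<noteq> s n"
  shows "has_cycle V E"
proof -
  have fin: "finite V" and in_V: "\<And>x y. E x y \<Longrightarrow> x \<in> V" and irr: "\<And>x. \<not> E x x"
    using sg unfolding simple_graph_def by auto
  have "range s \<subseteq> V" using walk in_V by blast
  then have "\<not> inj s"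
    using fin finite_subset finite_imageD infinite_UNIV_nat by blast
  then have "\<exists>j. \<exists>i<j. s i = s j" by (metis injI linorder_neqE_nat)
  define j where "j = (LEAST j. \<exists>i<j. s i = s j)"
  obtain i where ij: "i < j" "s i = s j"
    using LeastI_ex[OF \<open>\<exists>j. \<exists>i<j. s i = s j\<close>] unfolding j_def by blast
  have inj: "inj_on s {..<j}"
  proof (rule linorder_inj_onI)
    fix k l assume "k < l" "l \<in> {..<j}"
    then show "s k \<noteq> s l" using not_less_Least[of l "\<lambda>j. \<exists>i<j. s i = s j"] j_def by auto
  qed auto
  have "j \<noteq> Suc i" using ij walk[of i] irr by auto
  moreover have "j \<noteq> Suc (Suc i)" using ij no_backtrack[of i] by auto
  ultimately have long: "j \<ge> i + 3" using ij(1) by linarith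
  define cs where "cs = map s [i..<j]"
  have "distinct cs"
    unfolding cs_def distinct_map using inj by (auto intro: inj_on_subset)
  moreover have "E (last cs) (hd cs)"
    using long walk[of "j - 1"] ij(2) by (simp add: cs_def last_map hd_map)
  moreover have "\<forall>k. Suc k < length cs \<longrightarrow> E (cs ! k) (cs ! Suc k)"
    using walk by (auto simp: cs_def)
  moreover have "length cs \<ge> 3" "set cs \<subseteq> V"
    using long \<open>range s \<subseteq> V\<close> by (auto simp: cs_def)
  ultimately show ?thesis unfolding has_cycle_def by blast
qed

lemma has_cycle_if_nonbacktracking:
  assumes "simple_graph V E" "\<And>x y. H x y \<Longrightarrow> E x y" "H a b"
    and "\<And>x y. H x y \<Longrightarrow> \<exists>z. H y z \<and> z \<noteq> x"
  shows "has_cycle V E"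
  using assms nonbacktracking_walk[of H a b] has_cycle_if_walk[of V E] by metis

lemma skew_forcing_matching:
  assumes sg: "simple_graph V E" and forcing: "V \<subseteq> skew_closure V E B"
  shows "\<exists>M. matching E M \<and> V - B \<subseteq> matched M"
  using forcing
proof (induction "card (V - B)" arbitrary: B rule: less_induct)
  case less
  have fin: "finite V" and in_V: "\<And>x y. E x y \<Longrightarrow> y \<in> V" and sym: "\<And>x y. E x y \<Longrightarrow> E y x"
    using sg unfolding simple_graph_def by auto
  show ?case
  proof (cases "V \<subseteq> B")
    case True
    then show ?thesis by (intro exI[of _ "\<lambda>x y. False"]) (auto simp: matching_def)
  next
    case False
    then obtain u v where uv: "u \<in> V" "E u v" "v \<notin> B"
      and others: "\<forall>w. E u w \<and> w \<noteq> v \<longrightarrow> w \<in> B"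
      using skew_closure_least[of V E B] less.prems by blast
    have "card (V - insert v B) < card (V - B)"
      using fin in_V[OF uv(2)] uv(3) by (intro psubset_card_mono) auto
    moreover have "V \<subseteq> skew_closure V E (insert v B)"
      using less.prems skew_closure_mono[of B "insert v B" V E] by blast
    ultimately obtain M where M: "matching E M" "V - insert v B \<subseteq> matched M"
      using less.hyps by blast
    show ?thesis
    proof (cases "v \<in> matched M")
      case True
      then show ?thesis using M by blast
    next
      case False
      \<comment> \<open>the former partner of u is a neighbour of u other than v, hence in B\<close>
      have "{x. M x u} \<subseteq> B"
        using others matching_edge[OF M(1)] matching_sym[OF M(1)] False
        unfolding matched_def by blast
      then show ?thesis
        using matching_rematch[OF M(1) uv(2) sym[OF uv(2)] False] M(2) by blast
    qed
  qed
qed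

lemma matching_skew_forcing:
  assumes sg: "simple_graph V E" and acyclic: "\<not> has_cycle V E"
    and M: "matching E M" and covers: "V - S \<subseteq> matched M"
  shows "V \<subseteq> skew_closure V E S"
proof (rule ccontr)
  let ?C = "skew_closure V E S"
  assume "\<not> V \<subseteq> ?C"
  then obtain a where a: "a \<in> V" "a \<notin> ?C" by blast
  have in_V: "\<And>x y. E x y \<Longrightarrow> x \<in> V \<and> y \<in> V" and sym: "\<And>x y. E x y \<Longrightarrow> E y x"
    using sg unfolding simple_graph_def by auto
  have white_matched: "x \<in> V \<Longrightarrow> x \<notin> ?C \<Longrightarrow> \<exists>y. M x y" for x
    using covers subset_skew_closure[of S V E] unfolding matched_def by blast
  define H where "H x y \<longleftrightarrow> (x \<notin> ?C \<and> M x y) \<or> (y \<notin> ?C \<and> E x y \<and> \<not> M x y)" for x y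
  obtain b where "M a b" using white_matched a by blast
  then have "H a b" using a unfolding H_def by blast
  moreover have "H x y \<Longrightarrow> E x y" for x y
    using matching_edge[OF M] unfolding H_def by blast
  moreover have "\<exists>z. H y z \<and> z \<noteq> x" if "H x y" for x y
  proof -
    from that consider "x \<notin> ?C" "M x y" | "y \<notin> ?C" "E x y" "\<not> M x y"
      unfolding H_def by blast
    then show ?thesis
    proof cases
      case 1
      \<comment> \<open>y cannot force its white neighbour x, so it has another white neighbour\<close>
      have "E y x" using sym matching_edge[OF M] 1 by blast
      then obtain z where "E y z" "z \<noteq> x" "z \<notin> ?C"
        using skew_closure_other_white_neighbour[of y V E x S] in_V 1 by blast
      moreover have "\<not> M y z"
        using \<open>z \<noteq> x\<close> 1 matching_sym[OF M] matching_unique[OF M] by blast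
      ultimately have "H y z \<and> z \<noteq> x" unfolding H_def by blast
      then show ?thesis by blast
    next
      case 2
      then obtain z where "M y z" using white_matched in_V by blast
      moreover have "z \<noteq> x" using \<open>M y z\<close> 2 matching_sym[OF M] by blast
      ultimately have "H y z \<and> z \<noteq> x" using 2 unfolding H_def by blast
      then show ?thesis by blast
    qed
  qed
  ultimately have "has_cycle V E"
    using has_cycle_if_nonbacktracking[OF sg] by metis
  with acyclic show False ..
qed

lemma min_skew_forcing_set_unmatched:
  assumes sg: "simple_graph V E" and acyclic: "\<not> has_cycle V E"
    and min: "min_skew_forcing_set V E S"
  shows "\<exists>M. matching E M \<and> matched M = V - S"
proof -
  have fin: "finite V" and in_V: "\<And>x y. E x y \<Longrightarrow> x \<in> V"
    using sg unfolding simple_graph_def by auto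
  have "S \<subseteq> V" and "V \<subseteq> skew_closure V E S"
    using min unfolding min_skew_forcing_set_def skew_forcing_set_def by auto
  then obtain M where M: "matching E M" "V - S \<subseteq> matched M"
    using skew_forcing_matching[OF sg] by blast
  have matched_V: "matched M \<subseteq> V"
    using matching_edge[OF M(1)] in_V unfolding matched_def by blast
  define S' where "S' = V - matched M"
  have "skew_forcing_set V E S'"
    using matching_skew_forcing[OF sg acyclic M(1)] unfolding skew_forcing_set_def S'_def by blast
  moreover have "finite {S. skew_forcing_set V E S}"
    by (rule finite_subset[of _ "Pow V"]) (use fin in \<open>auto simp: skew_forcing_set_def\<close>)
  ultimately have "skew_zero_forcing_number V E \<le> card S'"
    unfolding skew_zero_forcing_number_def by (intro Min_le) auto
  then have "card S \<le> card S'" using min unfolding min_skew_forcing_set_def by simp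
  moreover have "S' \<subseteq> S" using M(2) S'_def by blast
  moreover have "finite S" using fin \<open>S \<subseteq> V\<close> finite_subset by blast
  ultimately have "S' = S" using card_seteq by blast
  then show ?thesis using M(1) matched_V S'_def by blast
qed

lemma matchings_sym_diff_continue:
  assumes M1: "matching E M1" and M2: "matching E M2"
    and xy: "M1 x y" "\<not> M2 x y" and "y \<in> matched M2"
  shows "\<exists>z. M2 y z \<and> \<not> M1 y z \<and> z \<noteq> x"
proof -
  obtain z where z: "M2 y z" using \<open>y \<in> matched M2\<close> unfolding matched_def by blast
  then have "z \<noteq> x" using xy(2) matching_sym[OF M2] by blast
  moreover have "M1 y x" using xy(1) matching_sym[OF M1] by blast
  ultimately show ?thesis using z matching_unique[OF M1] by blast
qed

lemma matching_partner_avoiding: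
  assumes "matching E M" "v \<in> matched M" "w \<notin> matched M"
  shows "\<exists>p. M v p \<and> p \<noteq> w"
  using assms matching_sym unfolding matched_def by fast

lemma token_slide_between_unmatched_sets_has_cycle:
  assumes sg: "simple_graph V E"
    and M1: "matching E M1" "matched M1 = V - S1"
    and M2: "matching E M2" "matched M2 = V - S2"
    and slide: "S1 - S2 = {v1}" "S2 - S1 = {v2}" "E v1 v2"
  shows "has_cycle V E"
proof -
  have in_V: "\<And>x y. E x y \<Longrightarrow> x \<in> V \<and> y \<in> V" and sym: "\<And>x y. E x y \<Longrightarrow> E y x"
    using sg unfolding simple_graph_def by auto
  have v1: "v1 \<notin> matched M1" "v1 \<in> matched M2"
    and v2: "v2 \<in> matched M1" "v2 \<notin> matched M2"
    using M1(2) M2(2) slide in_V[OF slide(3)] by auto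
  define H where "H x y \<longleftrightarrow> M1 x y \<noteq> M2 x y \<or> (x, y) = (v1, v2) \<or> (x, y) = (v2, v1)" for x y
  have "H x y \<Longrightarrow> E x y" for x y
    using matching_edge[OF M1(1)] matching_edge[OF M2(1)] slide(3) sym unfolding H_def by blast
  moreover have "\<exists>z. H y z \<and> z \<noteq> x" if "H x y" for x y
  proof (cases "y = v1 \<or> y = v2")
    case True
    \<comment> \<open>v1 and v2 have two H-neighbours each: each other, and their partner in the
        matching that covers them\<close>
    obtain p1 where "M2 v1 p1" "p1 \<noteq> v2"
      using matching_partner_avoiding[OF M2(1) v1(2) v2(2)] by blast
    moreover obtain p2 where "M1 v2 p2" "p2 \<noteq> v1"
      using matching_partner_avoiding[OF M1(1) v2(1) v1(1)] by blast
    moreover have "\<not> M1 v1 p1" "\<not> M2 v2 p2" using v1(1) v2(2) unfolding matched_def by blast+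
    ultimately have "H v1 p1" "H v2 p2" "H v1 v2" "H v2 v1" "p1 \<noteq> v2" "p2 \<noteq> v1"
      unfolding H_def by auto
    with True show ?thesis by blast
  next
    case False
    then have same: "y \<in> matched M1 \<longleftrightarrow> y \<in> matched M2"
      using M1(2) M2(2) slide(1,2) by blast
    from that False consider "M1 x y" "\<not> M2 x y" | "M2 x y" "\<not> M1 x y" unfolding H_def by auto
    then show ?thesis
    proof cases
      case 1
      then have "y \<in> matched M2" using same matching_sym[OF M1(1)] unfolding matched_def by blast
      then show ?thesis using matchings_sym_diff_continue[OF M1(1) M2(1) 1] unfolding H_def by auto
    next
      case 2
      then have "y \<in> matched M1" using same matching_sym[OF M2(1)] unfolding matched_def by blast
      then show ?thesis using matchings_sym_diff_continue[OF M2(1) M1(1) 2] unfolding H_def by auto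
    qed
  qed
  moreover have "H v1 v2" unfolding H_def by simp
  ultimately show ?thesis using has_cycle_if_nonbacktracking[OF sg] by metis
qed

theorem theorem5p29:
  fixes V :: "'a set" and E :: "'a \<Rightarrow> 'a \<Rightarrow> bool"
  assumes "tree V E"
  shows "\<not> (\<exists>S1 S2. skew_TS_edge V E S1 S2)"
proof
  assume "\<exists>S1 S2. skew_TS_edge V E S1 S2"
  then obtain S1 S2 v1 v2 where min: "min_skew_forcing_set V E S1" "min_skew_forcing_set V E S2"
    and slide: "S1 - S2 = {v1}" "S2 - S1 = {v2}" "E v1 v2"
    unfolding skew_TS_edge_def by blast
  have sg: "simple_graph V E" and acyclic: "\<not> has_cycle V E"
    using assms unfolding tree_def by auto
  obtain M1 M2 where "matching E M1" "matched M1 = V - S1" "matching E M2" "matched M2 = V - S2"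
    using min_skew_forcing_set_unmatched[OF sg acyclic] min by metis
  then have "has_cycle V E"
    using token_slide_between_unmatched_sets_has_cycle[OF sg _ _ _ _ slide] by blast
  with acyclic show False ..
qed

end
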